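(* Let $G\ge 2$ and $p_t\in(0,1)$. Let $r_{t,1},\dots,r_{t,G}$ be i.i.d. $\mathrm{Bernoulli}(p_t)$, $R=\sum_j r_{t,j}$, $\hat p_t=R/G$, $\mathcal S=\{1\le R\le G-1\}$, and for a real constant $c$ let $\tilde p_t=c\,\hat p_t$. Let $\epsilon\in(0,|p_t-\hat p_t|)$. If \[ c\in\left(\frac{(p_t-\epsilon)\bigl(1-(1-p_t)^G-p_t^G\bigr)}{p_t(1-p_t^{G-1})},\ \frac{(p_t+\epsilon)\bigl(1-(1-p_t)^G-p_t^G\bigr)}{p_t(1-p_t^{G-1})}\right), \] then $\mathbb E[\tilde p_t\mid\mathcal S]\in(p_t-\epsilon,\ p_t+\epsilon)$.
   Context: Binary-reward group setting: $p_t$ is the expected reward, $\hat p_t$ the group baseline, $\tilde p_t$ the rescaled baseline, $\mathcal S$ the event that the group rewards are not all equal. *)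

theory Defs
  imports "HOL-Probability.Probability"
begin

definition bern_group :: "nat \<Rightarrow> real \<Rightarrow> (nat \<Rightarrow> bool) pmf" where
  "bern_group G p = Pi_pmf {..<G} False (\<lambda>_. bernoulli_pmf p)"

definition num_correct :: "nat \<Rightarrow> (nat \<Rightarrow> bool) \<Rightarrow> nat" where
  "num_correct G \<omega> = card {j \<in> {..<G}. \<omega> j}"

definition phat :: "nat \<Rightarrow> (nat \<Rightarrow> bool) \<Rightarrow> real" where
  "phat G \<omega> = real (num_correct G \<omega>) / real G"

definition nondeg_event :: "nat \<Rightarrow> (nat \<Rightarrow> bool) set" where
  "nondeg_event G = {\<omega>. 1 \<le> num_correct G \<omega> \<and> num_correct G \<omega> \<le> G - 1}"

definition cond_exp_S :: "nat \<Rightarrow> real \<Rightarrow> ((nat \<Rightarrow> bool) \<Rightarrow> real) \<Rightarrow> real" where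
  "cond_exp_S G p X =
     measure_pmf.expectation (cond_pmf (bern_group G p) (nondeg_event G)) X"

end

theory Submission
  imports Defs
begin

text \<open>The number of successes R is binomial. Its restriction to S = {1 \<le> R \<le> G - 1} has
  mass 1 - (1 - p)^G - p^G and first moment Gp - Gp^G, obtained from the full binomial mass and
  mean by removing the two extreme outcomes; hence E[R/G | S] = p(1 - p^(G-1)) / P(S). The
  conditional mean of c R/G is therefore a positive multiple of c, and the interval for c is
  exactly the preimage of (p - \<epsilon>, p + \<epsilon>).\<close>

lemma expectation_binomial_pmf:
  assumes "p \<in> {0..1}"
  shows "measure_pmf.expectation (binomial_pmf n p) real = n * p"
proof -
  define Q where "Q = Pi_pmf {..<n} False (\<lambda>_. bernoulli_pmf p)"
  have "measure_pmf.expectation (binomial_pmf n p) real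
      = measure_pmf.expectation Q (\<lambda>f. \<Sum>i<n. of_bool (f i))"
    using binomial_pmf_altdef'[of "{..<n}" n p False] assms
    by (simp add: Q_def Int_def)
  also have "\<dots> = (\<Sum>i<n. measure_pmf.expectation Q (\<lambda>f. of_bool (f i)))"
    by (intro Bochner_Integration.integral_sum measure_pmf.integrable_const_bound[where B=1]) auto
  also have "\<dots> = (\<Sum>i<n. measure_pmf.expectation (map_pmf (\<lambda>f. f i) Q) of_bool)"
    by simp
  also have "\<dots> = n * p"
    using assms by (simp add: Q_def Pi_pmf_component)
  finally show ?thesis .
qed

lemma map_pmf_num_correct_bern_group:
  assumes "p \<in> {0..1}"
  shows "map_pmf (num_correct G) (bern_group G p) = binomial_pmf G p"
  using binomial_pmf_altdef'[of "{..<G}" G p False] assms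
  unfolding bern_group_def num_correct_def by simp

lemma expectation_cond_pmf_finite:
  fixes f :: "'a \<Rightarrow> real"
  assumes "finite A" and "set_pmf q \<inter> A \<noteq> {}"
  shows "measure_pmf.expectation (cond_pmf q A) f
           = (\<Sum>x\<in>A. pmf q x * f x) / measure_pmf.prob q A"
  using assms
  by (subst integral_measure_pmf[where A = A])
     (auto simp: pmf_cond sum_divide_distrib intro!: sum.cong)

lemma sum_atLeastAtMost_diff_ends:
  fixes f :: "nat \<Rightarrow> 'a::ab_group_add"
  assumes "n \<ge> 1"
  shows "(\<Sum>k\<in>{1..n-1}. f k) = (\<Sum>k\<le>n. f k) - f 0 - f n"
proof -
  have "{..n} = insert 0 (insert n {1..n-1})"
    using assms by auto
  then show ?thesis
    using assms by (simp add: algebra_simps)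
qed

lemma prob_binomial_pmf_interior:
  assumes "p \<in> {0..1}" and "n \<ge> 1"
  shows "measure_pmf.prob (binomial_pmf n p) {1..n-1} = 1 - (1 - p) ^ n - p ^ n"
proof -
  have "measure_pmf.prob (binomial_pmf n p) {1..n-1} = (\<Sum>k\<in>{1..n-1}. pmf (binomial_pmf n p) k)"
    by (simp add: measure_measure_pmf_finite)
  also have "\<dots> = (\<Sum>k\<le>n. pmf (binomial_pmf n p) k) - (1 - p) ^ n - p ^ n"
    using assms by (subst sum_atLeastAtMost_diff_ends) simp_all
  also have "(\<Sum>k\<le>n. pmf (binomial_pmf n p) k) = 1"
    using expectation_binomial_pmf'[OF assms(1), of n "\<lambda>_. 1::real"] assms(1) by simp
  finally show ?thesis .
qed

lemma binomial_interior_mass_pos: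
  fixes p :: real
  assumes "G \<ge> 2" and "0 < p" and "p < 1"
  shows "1 - (1 - p) ^ G - p ^ G > 0"
proof -
  have "0 < measure_pmf.prob (binomial_pmf G p) {1..G-1}"
    using assms by (intro measure_pmf_posI[of 1]) auto
  also have "\<dots> = 1 - (1 - p) ^ G - p ^ G"
    using assms by (intro prob_binomial_pmf_interior) auto
  finally show ?thesis .
qed

lemma sum_binomial_pmf_interior_real:
  assumes "p \<in> {0..1}" and "n \<ge> 1"
  shows "(\<Sum>k\<in>{1..n-1}. pmf (binomial_pmf n p) k * real k) = n * p - n * p ^ n"
proof -
  have "(\<Sum>k\<le>n. pmf (binomial_pmf n p) k * real k) = n * p"
    using expectation_binomial_pmf'[OF assms(1), of n real] expectation_binomial_pmf[OF assms(1)]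
      assms(1) by simp
  then show ?thesis
    using assms by (subst sum_atLeastAtMost_diff_ends) simp_all
qed

lemma cond_exp_S_num_correct:
  fixes f :: "nat \<Rightarrow> real"
  assumes "G \<ge> 2" and "0 < p" and "p < 1"
  shows "cond_exp_S G p (\<lambda>\<omega>. f (num_correct G \<omega>))
           = (\<Sum>k\<in>{1..G-1}. pmf (binomial_pmf G p) k * f k) / (1 - (1 - p) ^ G - p ^ G)"
proof -
  have p: "p \<in> {0..1}" using assms by simp
  have S: "nondeg_event G = num_correct G -` {1..G-1}"
    unfolding nondeg_event_def by auto
  have "1 \<in> set_pmf (binomial_pmf G p) \<inter> {1..G-1}"
    using assms by simp
  then have nonempty: "set_pmf (bern_group G p) \<inter> num_correct G -` {1..G-1} \<noteq> {}"
    unfolding map_pmf_num_correct_bern_group[OF p, symmetric] by auto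
  have "cond_exp_S G p (\<lambda>\<omega>. f (num_correct G \<omega>))
          = measure_pmf.expectation (cond_pmf (binomial_pmf G p) {1..G-1}) f"
    unfolding cond_exp_S_def S map_pmf_num_correct_bern_group[OF p, symmetric]
      cond_map_pmf[OF nonempty] by simp
  also have "\<dots> = (\<Sum>k\<in>{1..G-1}. pmf (binomial_pmf G p) k * f k)
                      / measure_pmf.prob (binomial_pmf G p) {1..G-1}"
    using \<open>1 \<in> _\<close> by (intro expectation_cond_pmf_finite) auto
  also have "measure_pmf.prob (binomial_pmf G p) {1..G-1} = 1 - (1 - p) ^ G - p ^ G"
    using assms p by (intro prob_binomial_pmf_interior) auto
  finally show ?thesis .
qed

lemma cond_exp_S_phat:
  assumes "G \<ge> 2" and "0 < p" and "p < 1"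
  shows "cond_exp_S G p (phat G) = p * (1 - p ^ (G - 1)) / (1 - (1 - p) ^ G - p ^ G)"
proof -
  have "(\<Sum>k\<in>{1..G-1}. pmf (binomial_pmf G p) k * (real k / G)) = p - p ^ G"
    using sum_binomial_pmf_interior_real[of p G] assms
    by (simp add: sum_divide_distrib[symmetric] field_simps)
  also have "\<dots> = p * (1 - p ^ (G - 1))"
    using assms by (cases G) (simp_all add: algebra_simps)
  finally show ?thesis
    using cond_exp_S_num_correct[OF assms, of "\<lambda>k. real k / G"] by (simp add: phat_def[abs_def])
qed

theorem lemma3:
  fixes G :: nat and p c \<epsilon> :: real
  assumes "G \<ge> 2" and "0 < p" and "p < 1"
    and "0 < \<epsilon>" and "\<epsilon> < \<bar>p - cond_exp_S G p (phat G)\<bar>"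
    and "(p - \<epsilon>) * (1 - (1 - p) ^ G - p ^ G) / (p * (1 - p ^ (G - 1))) < c"
    and "c < (p + \<epsilon>) * (1 - (1 - p) ^ G - p ^ G) / (p * (1 - p ^ (G - 1)))"
  shows "cond_exp_S G p (\<lambda>\<omega>. c * phat G \<omega>) \<in> {p - \<epsilon> <..< p + \<epsilon>}"
proof -
  define N where "N = 1 - (1 - p) ^ G - p ^ G"
  define D where "D = p * (1 - p ^ (G - 1))"
  have "N > 0"
    unfolding N_def using binomial_interior_mass_pos assms by blast
  have "p ^ (G - 1) < 1"
    using assms by (intro power_less_one_iff[THEN iffD2]) auto
  then have "D > 0"
    unfolding D_def using assms by simp
  have "cond_exp_S G p (\<lambda>\<omega>. c * phat G \<omega>) = c * D / N"
    using cond_exp_S_phat[OF assms(1-3)] unfolding cond_exp_S_def N_def D_def by simp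
  moreover have "p - \<epsilon> < c * D / N" and "c * D / N < p + \<epsilon>"
    using assms(6,7) \<open>N > 0\<close> \<open>D > 0\<close>
    unfolding N_def[symmetric] D_def[symmetric] by (simp_all add: field_simps)
  ultimately show ?thesis by simp
qed

end
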